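(* Let $(R_1,+_1,\circ_1)$ and $(R_2,+_2,\circ_2)$ be commutative multiplicative hyperrings with nonzero identity. Let $\alpha_1$ be a good endomorphism of $R_1$ and $\alpha_2$ a good endomorphism of $R_2$, and let $\bar\alpha(r_1,r_2)=(\alpha_1(r_1),\alpha_2(r_2))$ on $R_1\times R_2$. Let $I_1$ be a hyperideal of $R_1$. Then $I_1$ is an $\alpha_1$-prime hyperideal of $R_1$ if and only if $I_1\times R_2$ is an $\bar\alpha$-prime hyperideal of $R_1\times R_2$.
   Context: A multiplicative hyperring is an abelian group $(R,+)$ with a hyperoperation $\circ:R\times R\to \mathcal P^*(R)$ (nonempty subsets) such that $a\circ(b\circ c)=(a\circ b)\circ c$, $a\circ(b+c)\subseteq a\circ b+a\circ c$, $(b+c)\circ a\subseteq b\circ a+c\circ a$, and $a\circ(-b)=(-a)\circ b=-(a\circ b)$. Products of subsets are unions of elementwise products. Commutative means $a\circ b=b\circ a$. An identity $1$ satisfies $a\in1\circ a$ for all $a$. A hyperideal is a nonempty $I$ closed under subtraction with $r\circ x\subseteq I$ for $r\in R$, $x\in I$. Standing assumption: all hyperideals are $\mathbf C$-hyperideals, i.e. for every finite product $A=r_1\circ\cdots\circ r_n$, $A\cap I\neq\emptyset$ implies $A\subseteq I$. A good endomorphism $\alpha$ satisfies $\alpha(x+y)=\alpha(x)+\alpha(y)$ and $\alpha(x\circ y)=\alpha(x)\circ\alpha(y)$. A hyperideal $I$ is $\alpha$-prime if for all $x,y$, $x\circ y\subseteq I$ implies $x\in I$ or $\alpha(y)\in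 I$. $R_1\times R_2$ is the multiplicative hyperring with componentwise addition and $(x_1,x_2)\circ(y_1,y_2)=\{(x,y): x\in x_1\circ_1 y_1,\ y\in x_2\circ_2 y_2\}$. The map $\bar\alpha$ is a good endomorphism of it. *)

theory Defs
  imports Main "HOL-Library.Product_Plus"
begin

text \<open>A multiplicative hyperring is modelled on a whole type 'a carrying an abelian
group (R,+) (type class ab_group_add), together with a hyperoperation
hm :: 'a => 'a => 'a set.\<close>

definition hset_mult :: "('a \<Rightarrow> 'a \<Rightarrow> 'a set) \<Rightarrow> 'a set \<Rightarrow> 'a set \<Rightarrow> 'a set" where
  "hset_mult hm A B = (\<Union>a\<in>A. \<Union>b\<in>B. hm a b)"

definition hset_plus :: "'a::plus set \<Rightarrow> 'a set \<Rightarrow> 'a set" where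
  "hset_plus A B = {x + y | x y. x \<in> A \<and> y \<in> B}"

definition mult_hyperring :: "('a::ab_group_add \<Rightarrow> 'a \<Rightarrow> 'a set) \<Rightarrow> bool" where
  "mult_hyperring hm \<longleftrightarrow>
     (\<forall>a b. hm a b \<noteq> {}) \<and>
     (\<forall>a b c. hset_mult hm {a} (hm b c) = hset_mult hm (hm a b) {c}) \<and>
     (\<forall>a b c. hm a (b + c) \<subseteq> hset_plus (hm a b) (hm a c)) \<and>
     (\<forall>a b c. hm (b + c) a \<subseteq> hset_plus (hm b a) (hm c a)) \<and>
     (\<forall>a b. hm a (- b) = uminus ` (hm a b) \<and> hm (- a) b = uminus ` (hm a b))"

definition commutative_hop :: "('a \<Rightarrow> 'a \<Rightarrow> 'a set) \<Rightarrow> bool" where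
  "commutative_hop hm \<longleftrightarrow> (\<forall>a b. hm a b = hm b a)"

definition hop_identity :: "('a \<Rightarrow> 'a \<Rightarrow> 'a set) \<Rightarrow> 'a \<Rightarrow> bool" where
  "hop_identity hm e \<longleftrightarrow> (\<forall>a. a \<in> hm e a)"

definition comm_mhr_nonzero_id :: "('a::ab_group_add \<Rightarrow> 'a \<Rightarrow> 'a set) \<Rightarrow> bool" where
  "comm_mhr_nonzero_id hm \<longleftrightarrow> mult_hyperring hm \<and> commutative_hop hm \<and>
     (\<exists>e. e \<noteq> 0 \<and> hop_identity hm e)"

definition hprod :: "('a \<Rightarrow> 'a \<Rightarrow> 'a set) \<Rightarrow> 'a \<Rightarrow> 'a list \<Rightarrow> 'a set" where
  "hprod hm x ys = fold (\<lambda>y S. hset_mult hm S {y}) ys {x}"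

text \<open>Hyperideal; by the standing assumption every hyperideal is a C-hyperideal.\<close>
definition hyperideal :: "('a::ab_group_add \<Rightarrow> 'a \<Rightarrow> 'a set) \<Rightarrow> 'a set \<Rightarrow> bool" where
  "hyperideal hm I \<longleftrightarrow> I \<noteq> {} \<and> (\<forall>x\<in>I. \<forall>y\<in>I. x - y \<in> I) \<and>
     (\<forall>r. \<forall>x\<in>I. hm r x \<subseteq> I) \<and>
     (\<forall>x ys. hprod hm x ys \<inter> I \<noteq> {} \<longrightarrow> hprod hm x ys \<subseteq> I)"

definition good_endo :: "('a::ab_group_add \<Rightarrow> 'a \<Rightarrow> 'a set) \<Rightarrow> ('a \<Rightarrow> 'a) \<Rightarrow> bool" where
  "good_endo hm \<alpha> \<longleftrightarrow> (\<forall>x y. \<alpha> (x + y) = \<alpha> x + \<alpha> y) \<and>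
     (\<forall>x y. \<alpha> ` (hm x y) = hm (\<alpha> x) (\<alpha> y))"

definition alpha_prime :: "('a::ab_group_add \<Rightarrow> 'a \<Rightarrow> 'a set) \<Rightarrow> ('a \<Rightarrow> 'a) \<Rightarrow> 'a set \<Rightarrow> bool" where
  "alpha_prime hm \<alpha> I \<longleftrightarrow> hyperideal hm I \<and>
     (\<forall>x y. hm x y \<subseteq> I \<longrightarrow> x \<in> I \<or> \<alpha> y \<in> I)"

text \<open>Product hyperoperation on R1 x R2 (addition is componentwise via Product_Plus).\<close>
definition prod_hop :: "('a \<Rightarrow> 'a \<Rightarrow> 'a set) \<Rightarrow> ('b \<Rightarrow> 'b \<Rightarrow> 'b set) \<Rightarrow>
    ('a \<times> 'b) \<Rightarrow> ('a \<times> 'b) \<Rightarrow> ('a \<times> 'b) set" where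
  "prod_hop hm1 hm2 p q = hm1 (fst p) (fst q) \<times> hm2 (snd p) (snd q)"

end

theory Submission
  imports Defs
begin

text \<open>Products in R1 \<times> R2 are computed componentwise, so every finite product is a
rectangle A \<times> B. Hence I1 \<times> R2 meets such a product iff I1 meets A, which transfers the
C-condition, and x \<circ> y \<subseteq> I1 \<times> R2 iff the first components satisfy x1 \<circ> y1 \<subseteq> I1
(the second factor being nonempty).\<close>

lemma hset_mult_prod_hop_Times:
  "hset_mult (prod_hop hm1 hm2) (A \<times> B) {y} =
   hset_mult hm1 A {fst y} \<times> hset_mult hm2 B {snd y}"
  unfolding hset_mult_def prod_hop_def by auto

lemma hprod_prod_hop:
  "hprod (prod_hop hm1 hm2) x ys =
   hprod hm1 (fst x) (map fst ys) \<times> hprod hm2 (snd x) (map snd ys)"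
proof -
  have "fold (\<lambda>y S. hset_mult (prod_hop hm1 hm2) S {y}) ys (A \<times> B) =
        fold (\<lambda>y S. hset_mult hm1 S {y}) (map fst ys) A \<times>
        fold (\<lambda>y S. hset_mult hm2 S {y}) (map snd ys) B" for A B
    by (induction ys arbitrary: A B) (simp_all add: hset_mult_prod_hop_Times)
  from this[of "{fst x}" "{snd x}"] show ?thesis
    unfolding hprod_def by simp
qed

lemma hyperideal_UNIV: "hyperideal hm UNIV"
  unfolding hyperideal_def by simp

lemma hyperideal_Times:
  assumes I: "hyperideal hm1 I" and J: "hyperideal hm2 J"
  shows "hyperideal (prod_hop hm1 hm2) (I \<times> J)"
  unfolding hyperideal_def
proof (intro conjI allI ballI impI)
  show "I \<times> J \<noteq> {}"
    using I J unfolding hyperideal_def by simp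
next
  fix x y :: "'a \<times> 'b"
  assume "x \<in> I \<times> J" "y \<in> I \<times> J"
  then show "x - y \<in> I \<times> J"
    using I J unfolding hyperideal_def by (auto simp: mem_Times_iff)
next
  fix r x :: "'a \<times> 'b"
  assume "x \<in> I \<times> J"
  then have "fst x \<in> I" "snd x \<in> J"
    by auto
  then have "hm1 (fst r) (fst x) \<subseteq> I" "hm2 (snd r) (snd x) \<subseteq> J"
    using I J unfolding hyperideal_def by simp_all
  then show "prod_hop hm1 hm2 r x \<subseteq> I \<times> J"
    unfolding prod_hop_def by blast
next
  fix x ys
  let ?A = "hprod hm1 (fst x) (map fst ys)" and ?B = "hprod hm2 (snd x) (map snd ys)"
  assume "hprod (prod_hop hm1 hm2) x ys \<inter> (I \<times> J) \<noteq> {}"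
  then have "?A \<inter> I \<noteq> {}" "?B \<inter> J \<noteq> {}"
    unfolding hprod_prod_hop by auto
  then have "?A \<subseteq> I" "?B \<subseteq> J"
    using I J unfolding hyperideal_def by blast+
  then show "hprod (prod_hop hm1 hm2) x ys \<subseteq> I \<times> J"
    unfolding hprod_prod_hop by blast
qed

lemma alpha_prime_Times_UNIV:
  assumes prime: "alpha_prime hm1 \<alpha>1 I"
    and nonempty: "\<And>a b. hm2 a b \<noteq> {}"
  shows "alpha_prime (prod_hop hm1 hm2) (map_prod \<alpha>1 \<alpha>2) (I \<times> UNIV)"
  unfolding alpha_prime_def
proof (intro conjI allI impI)
  show "hyperideal (prod_hop hm1 hm2) (I \<times> UNIV)"
    using prime hyperideal_UNIV unfolding alpha_prime_def by (blast intro: hyperideal_Times)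
next
  fix x y :: "'a \<times> 'b"
  assume "prod_hop hm1 hm2 x y \<subseteq> I \<times> UNIV"
  then have "hm1 (fst x) (fst y) \<subseteq> I"
    using nonempty[of "snd x" "snd y"] unfolding prod_hop_def by auto
  then have "fst x \<in> I \<or> \<alpha>1 (fst y) \<in> I"
    using prime unfolding alpha_prime_def by blast
  then show "x \<in> I \<times> UNIV \<or> map_prod \<alpha>1 \<alpha>2 y \<in> I \<times> UNIV"
    by (cases y) (simp add: mem_Times_iff)
qed

lemma alpha_prime_of_Times_UNIV:
  fixes hm2 :: "'b::ab_group_add \<Rightarrow> 'b \<Rightarrow> 'b set"
  assumes "hyperideal hm1 I"
    and prime: "alpha_prime (prod_hop hm1 hm2) (map_prod \<alpha>1 \<alpha>2) (I \<times> (UNIV :: 'b set))"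
  shows "alpha_prime hm1 \<alpha>1 I"
  unfolding alpha_prime_def
proof (intro conjI allI impI)
  fix x y
  assume "hm1 x y \<subseteq> I"
  then have "prod_hop hm1 hm2 (x, 0) (y, 0) \<subseteq> I \<times> UNIV"
    unfolding prod_hop_def by auto
  then have "(x, 0) \<in> I \<times> UNIV \<or> map_prod \<alpha>1 \<alpha>2 (y, 0) \<in> I \<times> (UNIV :: 'b set)"
    using prime unfolding alpha_prime_def by blast
  then show "x \<in> I \<or> \<alpha>1 y \<in> I"
    by auto
qed (fact assms(1))

theorem mainTheorem18:
  fixes hm1 :: "'a::ab_group_add \<Rightarrow> 'a \<Rightarrow> 'a set"
    and hm2 :: "'b::ab_group_add \<Rightarrow> 'b \<Rightarrow> 'b set"
    and \<alpha>1 :: "'a \<Rightarrow> 'a" and \<alpha>2 :: "'b \<Rightarrow> 'b"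
    and I1 :: "'a set"
  assumes "comm_mhr_nonzero_id hm1" and "comm_mhr_nonzero_id hm2"
    and "good_endo hm1 \<alpha>1" and "good_endo hm2 \<alpha>2"
    and "hyperideal hm1 I1"
  shows "alpha_prime hm1 \<alpha>1 I1 \<longleftrightarrow>
         alpha_prime (prod_hop hm1 hm2) (map_prod \<alpha>1 \<alpha>2) (I1 \<times> (UNIV :: 'b set))"
proof
  assume "alpha_prime hm1 \<alpha>1 I1"
  moreover have "\<And>a b. hm2 a b \<noteq> {}"
    \<comment> \<open>the only hyperring axiom the equivalence needs\<close>
    using assms(2) by (simp add: comm_mhr_nonzero_id_def mult_hyperring_def)
  ultimately show "alpha_prime (prod_hop hm1 hm2) (map_prod \<alpha>1 \<alpha>2) (I1 \<times> UNIV)"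
    by (rule alpha_prime_Times_UNIV)
next
  assume "alpha_prime (prod_hop hm1 hm2) (map_prod \<alpha>1 \<alpha>2) (I1 \<times> (UNIV :: 'b set))"
  with assms(5) show "alpha_prime hm1 \<alpha>1 I1"
    by (rule alpha_prime_of_Times_UNIV)
qed

end
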